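(* Let $\mathcal{T}$ be a trifocal Grassmann tensor of dimension $n_1\times n_2\times n_3$ satisfying the Genericity Assumption, with canonical form $\mathcal{T}^c$ and multilinear rank $(r_1,r_2,r_3)$. Let $V_j\in GL(n_j)$ ($j=1,2,3$) be invertible matrices with $\mathcal{T}^c=(V_1,V_2,V_3)\cdot\mathcal{T}$. For each $j$ let $k_1<\dots<k_{r_j}$ be the indices of the nonzero rows of the flattening $\mathcal{T}^c_j$, and let $U_j$ be the $n_j\times r_j$ matrix with columns $\mathbf{e}_{k_1},\dots,\mathbf{e}_{k_{r_j}}$ (standard basis vectors of $\mathbb{C}^{n_j}$). Put $\mathcal{C}^c=(U_1^*,U_2^*,U_3^* )\cdot\mathcal{T}^c$ (the tensor obtained from $\mathcal{T}^c$ by deleting all zero slices). Let $M_j=V_j^{-1}U_j$, let $E_j$ be an $r_j\times r_j$ unitary matrix whose columns are orthonormal eigenvectors of $M_j^*M_j$, and let $D_j$ be the diagonal matrix of the corresponding singular values of $M_j$ (square roots of the eigenvalues, in the same order). Set $B_j=E_jD_j^{-1}$, $S_j=M_jB_j$ and $\mathcal{C}=(B_1^{-1},B_2^{-1},B_3^{-1})\cdot\mathcal{C}^c$. Then each $S_j$ is semi-orthogonal ($S_j^*S_j=I_{r_j}$), $\mathcal{T}=(S_1,S_2,S_3)\cdot\mathcal{C}$ and $\mathcal{C}=(S_1^*,S_2^*,S_3^* )\cdot\mathcal{T}$; that is, $\mathcal{C}$ is a core of $\mathcal{T}$.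
   Context: Work over $\mathbb{C}$; $A^*$ is the conjugate transpose. Multilinear multiplication: for matrices $A_r$ of size $m_r\times n_r$ and a tensor $\mathcal{T}=[T_{i,j,k}]$ of dimension $n_1\times n_2\times n_3$, $(A_1,A_2,A_3)\cdot\mathcal{T}$ is the $m_1\times m_2\times m_3$ tensor with entries $\sum_{i',j',k'}(A_1)_{i,i'}(A_2)_{j,j'}(A_3)_{k,k'}T_{i',j',k'}$. Flattenings: $\mathcal{T}_1$ is the $n_1\times(n_2n_3)$ matrix whose row $i$ contains the entries $T_{i,j,k}$; $\mathcal{T}_2,\mathcal{T}_3$ analogously; the multilinear rank is $(\mathrm{rk}\,\mathcal{T}_1,\mathrm{rk}\,\mathcal{T}_2,\mathrm{rk}\,\mathcal{T}_3)$. A core of $\mathcal{T}$ with multilinear rank $(r_1,r_2,r_3)$ is a tensor $\mathcal{C}$ of dimension $r_1\times r_2\times r_3$ for which there exist $n_j\times r_j$ matrices $S_j$ with $S_j^*S_j=I_{r_j}$, $(S_1^*,S_2^*,S_3^* )\cdot\mathcal{T}=\mathcal{C}$ and $(S_1,S_2,S_3)\cdot\mathcal{C}=\mathcal{T}$. Trifocal Grassmann tensor: let $P_j$ ($j=1,2,3$) be maximal-rank $(h_j+1)\times(k+1)$ matrices, $h_j\ge2$, with profile $(\alpha_1,\alpha_2,\alpha_3)$ ($1\le\alpha_j\le h_j$, $\sum\alpha_j=k+1$), $s_j=h_j-\alpha_j$. Entries $\mathcal{T}_{I,J,K}$ (multi-indices $I,J,K$ of sizes $s_j+1$, lexicographically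 ordered) are the determinants of the square submatrices of $[P_1^T|P_2^T|P_3^T]$ formed by the columns of block 1 not in $I$, block 2 not in $J$, block 3 not in $K$. Genericity Assumption: with $L_j$ the column space of $P_j^T$, $L_t+(L_r\cap L_s)=\mathbb{C}^{k+1}$ for all $\{r,s,t\}=\{1,2,3\}$. With $i=h_1+h_2+h_3+1-2k$, $j_{r,s}=k-h_t$, there are $H_j\in GL(h_j+1)$, $K\in GL(k+1)$ with $[(H_1P_1K)^T|(H_2P_2K)^T|(H_3P_3K)^T]=\Phi$, where (row blocks of sizes $i,j_{1,2},j_{1,3},j_{2,3}$) $$\Phi=\left[\begin{array}{ccc|ccc|ccc} I_i&0&0&I_i&0&0&I_i&0&0\\ 0&I_{j_{1,2}}&0&0&I_{j_{1,2}}&0&0&0&0\\ 0&0&I_{j_{1,3}}&0&0&0&0&I_{j_{1,3}}&0\\ 0&0&0&0&0&I_{j_{2,3}}&0&0&I_{j_{2,3}}\end{array}\right],$$ and the canonical form $\mathcal{T}^c$ is the Grassmann tensor of the same profile computed from $\Phi$. In the canonical form, every column of each flattening $\mathcal{T}^c_j$ is either zero or a standard basis vector up to sign (at most one nonzero entry per column, equal to $\pm1$), and the multilinear ranks of $\mathcal{T}$ and $\mathcal{T}^c$ agree. *)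

theory Defs
  imports Complex_Main
    "Jordan_Normal_Form.Schur_Decomposition"
    "Jordan_Normal_Form.DL_Rank"
    "Jordan_Normal_Form.Determinant"
begin

text \<open>A tensor of dimension n1 x n2 x n3 is a function on index triples; only
  indices i < n1, j < n2, l < n3 are meaningful (0-based indexing).\<close>
type_synonym tensor3 = "nat \<Rightarrow> nat \<Rightarrow> nat \<Rightarrow> complex"

definition teq :: "nat \<Rightarrow> nat \<Rightarrow> nat \<Rightarrow> tensor3 \<Rightarrow> tensor3 \<Rightarrow> bool" where
  "teq n1 n2 n3 T T' \<longleftrightarrow> (\<forall>i<n1. \<forall>j<n2. \<forall>l<n3. T i j l = T' i j l)"

definition mlmul :: "complex mat \<Rightarrow> complex mat \<Rightarrow> complex mat \<Rightarrow> tensor3 \<Rightarrow> tensor3" where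
  "mlmul A1 A2 A3 T = (\<lambda>i j l.
     \<Sum>i'<dim_col A1. \<Sum>j'<dim_col A2. \<Sum>l'<dim_col A3.
       A1 $$ (i,i') * A2 $$ (j,j') * A3 $$ (l,l') * T i' j' l')"

text \<open>Flattenings (the order of the columns is immaterial for everything below).\<close>
definition flat1 :: "nat \<Rightarrow> nat \<Rightarrow> nat \<Rightarrow> tensor3 \<Rightarrow> complex mat" where
  "flat1 n1 n2 n3 T = mat n1 (n2 * n3) (\<lambda>(i,c). T i (c div n3) (c mod n3))"
definition flat2 :: "nat \<Rightarrow> nat \<Rightarrow> nat \<Rightarrow> tensor3 \<Rightarrow> complex mat" where
  "flat2 n1 n2 n3 T = mat n2 (n1 * n3) (\<lambda>(j,c). T (c div n3) j (c mod n3))"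
definition flat3 :: "nat \<Rightarrow> nat \<Rightarrow> nat \<Rightarrow> tensor3 \<Rightarrow> complex mat" where
  "flat3 n1 n2 n3 T = mat n3 (n1 * n2) (\<lambda>(l,c). T (c div n2) (c mod n2) l)"

definition mrank :: "complex mat \<Rightarrow> nat" where
  "mrank A = vec_space.rank (dim_row A) A"

definition minv :: "complex mat \<Rightarrow> complex mat" where
  "minv A = (SOME B. inverts_mat A B \<and> inverts_mat B A)"

text \<open>All increasing lists of length m drawn from xs, in lexicographic order
  (for xs strictly increasing).\<close>
fun combs :: "nat list \<Rightarrow> nat \<Rightarrow> nat list list" where
  "combs xs 0 = [[]]"
| "combs [] (Suc m) = []"
| "combs (x # xs) (Suc m) = map ((#) x) (combs xs m) @ combs xs (Suc m)"

text \<open>For P of size (h+1) x (k+1) and profile entry alpha, the multi-indices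
  have size s+1 = h+1-alpha and range over subsets of the rows of P
  (= columns of P^T), lexicographically ordered.\<close>
definition midxs :: "complex mat \<Rightarrow> nat \<Rightarrow> nat list list" where
  "midxs P a = combs [0..<dim_row P] (dim_row P - a)"

definition gdim :: "complex mat \<Rightarrow> nat \<Rightarrow> nat" where
  "gdim P a = length (midxs P a)"

definition cmpl_cols :: "complex mat \<Rightarrow> nat list \<Rightarrow> complex vec list" where
  "cmpl_cols P I = map (row P) (filter (\<lambda>r. r \<notin> set I) [0..<dim_row P])"

text \<open>Trifocal Grassmann tensor of profile (a1,a2,a3): entry (I,J,K) is the determinant
  of the square submatrix of [P1^T|P2^T|P3^T] formed by the columns of block 1 not in I,
  of block 2 not in J and of block 3 not in K.\<close>
definition grassmann :: "complex mat \<Rightarrow> complex mat \<Rightarrow> complex mat \<Rightarrow> nat \<Rightarrow> nat \<Rightarrow> nat \<Rightarrow> tensor3" where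
  "grassmann P1 P2 P3 a1 a2 a3 = (\<lambda>i j l.
     det (mat_of_cols (dim_col P1)
       (cmpl_cols P1 (midxs P1 a1 ! i) @ cmpl_cols P2 (midxs P2 a2 ! j) @ cmpl_cols P3 (midxs P3 a3 ! l))))"

definition colspaceT :: "complex mat \<Rightarrow> complex vec set" where
  "colspaceT P = {transpose_mat P *\<^sub>v x | x. x \<in> carrier_vec (dim_row P)}"

definition vsum :: "complex vec set \<Rightarrow> complex vec set \<Rightarrow> complex vec set" where
  "vsum A B = {u + v | u v. u \<in> A \<and> v \<in> B}"

definition genericity :: "nat \<Rightarrow> complex mat \<Rightarrow> complex mat \<Rightarrow> complex mat \<Rightarrow> bool" where
  "genericity k P1 P2 P3 \<longleftrightarrow>
     vsum (colspaceT P3) (colspaceT P1 \<inter> colspaceT P2) = carrier_vec (k+1) \<and>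
     vsum (colspaceT P2) (colspaceT P1 \<inter> colspaceT P3) = carrier_vec (k+1) \<and>
     vsum (colspaceT P1) (colspaceT P2 \<inter> colspaceT P3) = carrier_vec (k+1)"

text \<open>The matrix Phi of size (k+1) x ((h1+1)+(h2+1)+(h3+1)), with row blocks of sizes
  i, j12, j13, j23, where i = h1+h2+h3+1-2k and j_rs = k - h_t.  Each column of Phi is a
  standard basis vector; phi_row gives the row of its entry 1.
  Block 1 (column sub-blocks I_i, I_j12, I_j13): column c is e_c.
  Block 2 (column sub-blocks I_i, I_j12, I_j23): column c is e_c if c < i+j12,
     else e_(i+j12+j13+(c-i-j12)) = e_(c+j13).
  Block 3 (column sub-blocks I_i, I_j13, I_j23): column c is e_c if c < i,
     else e_(c+j12).\<close>
definition phi_row :: "nat \<Rightarrow> nat \<Rightarrow> nat \<Rightarrow> nat \<Rightarrow> nat \<Rightarrow> nat" where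
  "phi_row h1 h2 h3 k c =
    (let i = h1 + h2 + h3 + 1 - 2*k; j12 = k - h3; j13 = k - h2 in
     if c < h1 + 1 then c
     else if c < h1 + 1 + h2 + 1 then
       (let c' = c - (h1+1) in if c' < i + j12 then c' else c' + j13)
     else
       (let c' = c - (h1+1) - (h2+1) in if c' < i then c' else c' + j12))"

definition Phi :: "nat \<Rightarrow> nat \<Rightarrow> nat \<Rightarrow> nat \<Rightarrow> complex mat" where
  "Phi h1 h2 h3 k = mat (k+1) ((h1+1)+(h2+1)+(h3+1))
     (\<lambda>(a,c). if a = phi_row h1 h2 h3 k c then 1 else 0)"

definition canP1 :: "nat \<Rightarrow> nat \<Rightarrow> nat \<Rightarrow> nat \<Rightarrow> complex mat" where
  "canP1 h1 h2 h3 k = mat (h1+1) (k+1) (\<lambda>(c,a). Phi h1 h2 h3 k $$ (a, c))"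
definition canP2 :: "nat \<Rightarrow> nat \<Rightarrow> nat \<Rightarrow> nat \<Rightarrow> complex mat" where
  "canP2 h1 h2 h3 k = mat (h2+1) (k+1) (\<lambda>(c,a). Phi h1 h2 h3 k $$ (a, (h1+1) + c))"
definition canP3 :: "nat \<Rightarrow> nat \<Rightarrow> nat \<Rightarrow> nat \<Rightarrow> complex mat" where
  "canP3 h1 h2 h3 k = mat (h3+1) (k+1) (\<lambda>(c,a). Phi h1 h2 h3 k $$ (a, (h1+1) + (h2+1) + c))"

definition canonical_form :: "nat \<Rightarrow> nat \<Rightarrow> nat \<Rightarrow> nat \<Rightarrow> nat \<Rightarrow> nat \<Rightarrow> nat \<Rightarrow> tensor3" where
  "canonical_form h1 h2 h3 k a1 a2 a3 =
     grassmann (canP1 h1 h2 h3 k) (canP2 h1 h2 h3 k) (canP3 h1 h2 h3 k) a1 a2 a3"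

definition nz_rows :: "complex mat \<Rightarrow> nat list" where
  "nz_rows F = filter (\<lambda>i. row F i \<noteq> 0\<^sub>v (dim_col F)) [0..<dim_row F]"

definition sel_mat :: "complex mat \<Rightarrow> complex mat" where
  "sel_mat F = mat (dim_row F) (length (nz_rows F)) (\<lambda>(a,b). if a = nz_rows F ! b then 1 else 0)"

end

theory Submission
  imports Defs
begin

text \<open>Only the equivalence \<open>T\<^sup>c = (V\<^sub>1,V\<^sub>2,V\<^sub>3)\<cdot>T\<close> is used, not the
  Grassmann structure. Since \<open>U\<^sub>j U\<^sub>j\<^sup>*\<close> is the coordinate projection onto the nonzero
  rows of the \<open>j\<close>-th flattening of \<open>T\<^sup>c\<close>, deleting and re-inserting the zero slices gives
  \<open>T\<^sup>c = (U\<^sub>1,U\<^sub>2,U\<^sub>3)\<cdot>C\<^sup>c\<close>, hence \<open>T = (M\<^sub>1,M\<^sub>2,M\<^sub>3)\<cdot>C\<^sup>c\<close> with each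
  \<open>M\<^sub>j = V\<^sub>j\<^sup>-\<^sup>1U\<^sub>j\<close> injective. Injectivity makes the eigenvalues \<open>D\<^sub>j\<^sup>2\<close> of the Gram
  matrix \<open>M\<^sub>j\<^sup>*M\<^sub>j\<close> nonzero, and \<open>M\<^sub>j\<^sup>*M\<^sub>j E\<^sub>j = E\<^sub>j D\<^sub>j\<^sup>2\<close> then gives
  \<open>S\<^sub>j\<^sup>*S\<^sub>j = I\<close>. Finally \<open>M\<^sub>j = S\<^sub>j B\<^sub>j\<^sup>-\<^sup>1\<close> and \<open>S\<^sub>j\<^sup>*M\<^sub>j = B\<^sub>j\<^sup>-\<^sup>1\<close> turn
  \<open>T = M\<cdot>C\<^sup>c\<close> into \<open>T = S\<cdot>C\<close> and \<open>S\<^sup>*\<cdot>T = C\<close>.\<close>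

lemma dim_mat_adjoint [simp]:
  "dim_row (mat_adjoint A) = dim_col A" "dim_col (mat_adjoint A) = dim_row A"
  unfolding mat_adjoint_def by auto

lemma index_mat_adjoint [simp]:
  fixes A :: "complex mat"
  assumes "i < dim_col A" "j < dim_row A"
  shows "mat_adjoint A $$ (i,j) = cnj (A $$ (j,i))"
  using assms unfolding mat_adjoint_def by (simp add: mat_of_rows_index)

lemma index_mult_mat_sum:
  assumes "A \<in> carrier_mat p q" "B \<in> carrier_mat q s" "i < p" "k < s"
  shows "(A * B) $$ (i,k) = (\<Sum>a<q. A $$ (i,a) * B $$ (a,k))"
  using assms by (simp add: scalar_prod_def lessThan_atLeast0)

lemma mat_adjoint_mult:
  fixes A B :: "complex mat"
  assumes "A \<in> carrier_mat n m" "B \<in> carrier_mat m p"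
  shows "mat_adjoint (A * B) = mat_adjoint B * mat_adjoint A"
proof (rule eq_matI)
  fix i j assume "i < dim_row (mat_adjoint B * mat_adjoint A)" "j < dim_col (mat_adjoint B * mat_adjoint A)"
  with assms have "i < p" "j < n" by auto
  then have "(mat_adjoint B * mat_adjoint A) $$ (i,j) = (\<Sum>a<m. cnj (B $$ (a,i)) * cnj (A $$ (j,a)))"
    using assms by (subst index_mult_mat_sum[of _ p m _ n]) auto
  moreover have "mat_adjoint (A * B) $$ (i,j) = cnj ((A * B) $$ (j,i))"
    using assms \<open>i < p\<close> \<open>j < n\<close> by (intro index_mat_adjoint) auto
  ultimately show "mat_adjoint (A * B) $$ (i,j) = (mat_adjoint B * mat_adjoint A) $$ (i,j)"
    using \<open>i < p\<close> \<open>j < n\<close> by (simp add: index_mult_mat_sum[OF assms] mult.commute)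
qed (use assms in auto)

lemma mat_adjoint_one [simp]: "mat_adjoint (1\<^sub>m n :: complex mat) = 1\<^sub>m n"
  by (rule eq_matI) auto

lemma mat_adjoint_real_diagonal:
  fixes D :: "complex mat"
  assumes "D \<in> carrier_mat r r" "diagonal_mat D" "\<forall>i<r. Im (D $$ (i,i)) = 0"
  shows "mat_adjoint D = D"
proof (rule eq_matI)
  fix i j assume "i < dim_row D" "j < dim_col D"
  with assms show "mat_adjoint D $$ (i,j) = D $$ (i,j)"
    by (cases "i = j") (auto simp: diagonal_mat_def complex_eq_iff)
qed (use assms in auto)

lemma mat_adjoint_inner:
  fixes M :: "complex mat"
  assumes M: "M \<in> carrier_mat n r" and w: "w \<in> carrier_vec n" and v: "v \<in> carrier_vec r"
  shows "(mat_adjoint M *\<^sub>v w) \<bullet>c v = w \<bullet>c (M *\<^sub>v v)"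
proof -
  have "(mat_adjoint M *\<^sub>v w) \<bullet>c v = (\<Sum>a<r. \<Sum>k<n. cnj (M $$ (k,a)) * w $ k * cnj (v $ a))"
    using assms by (simp add: scalar_prod_def lessThan_atLeast0 sum_distrib_right)
  also have "\<dots> = (\<Sum>k<n. \<Sum>a<r. cnj (M $$ (k,a)) * w $ k * cnj (v $ a))"
    by (rule sum.swap)
  also have "\<dots> = w \<bullet>c (M *\<^sub>v v)"
    using assms by (simp add: scalar_prod_def lessThan_atLeast0 sum_distrib_left mult_ac)
  finally show ?thesis .
qed

lemma minv_of_right_inverse:
  fixes A X :: "complex mat"
  assumes A: "A \<in> carrier_mat n n" and X: "X \<in> carrier_mat n n" and AX: "A * X = 1\<^sub>m n"
  shows "minv A \<in> carrier_mat n n" and "A * minv A = 1\<^sub>m n" and "minv A * A = 1\<^sub>m n"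
proof -
  have "inverts_mat A X \<and> inverts_mat X A"
    using assms mat_mult_left_right_inverse[OF A X AX] unfolding inverts_mat_def by auto
  then have "inverts_mat A (minv A) \<and> inverts_mat (minv A) A"
    unfolding minv_def by (rule someI)
  then have right: "A * minv A = 1\<^sub>m n" and left: "minv A * A = 1\<^sub>m (dim_row (minv A))"
    using A unfolding inverts_mat_def by auto
  from arg_cong[OF right, of dim_col] arg_cong[OF left, of dim_col] A
  show "minv A \<in> carrier_mat n n" by auto
  with right left show "A * minv A = 1\<^sub>m n" "minv A * A = 1\<^sub>m n" by auto
qed

lemma minv_of_invertible:
  fixes A :: "complex mat"
  assumes A: "A \<in> carrier_mat n n" and "invertible_mat A"
  shows "minv A \<in> carrier_mat n n" and "A * minv A = 1\<^sub>m n" and "minv A * A = 1\<^sub>m n"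
proof -
  obtain X where "A * X = 1\<^sub>m n" "X * A = 1\<^sub>m (dim_row X)"
    using assms unfolding invertible_mat_def inverts_mat_def by auto
  moreover from this have "X \<in> carrier_mat n n"
    using A by (metis carrier_matD(2) carrier_matI index_mult_mat(3) index_one_mat(3))
  ultimately show "minv A \<in> carrier_mat n n" "A * minv A = 1\<^sub>m n" "minv A * A = 1\<^sub>m n"
    using minv_of_right_inverse[OF A] by auto
qed

lemma minv_mult_injective:
  fixes V U :: "complex mat"
  assumes V: "V \<in> carrier_mat n n" "invertible_mat V" and U: "U \<in> carrier_mat n r"
    and inj: "\<And>v. v \<in> carrier_vec r \<Longrightarrow> U *\<^sub>v v = 0\<^sub>v n \<Longrightarrow> v = 0\<^sub>v r"
    and v: "v \<in> carrier_vec r" and "(minv V * U) *\<^sub>v v = 0\<^sub>v n"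
  shows "v = 0\<^sub>v r"
proof (rule inj[OF v])
  note W = minv_of_invertible[OF V]
  have "V * (minv V * U) = U"
    using assoc_mult_mat[OF V(1) W(1) U, symmetric] W(2) U by simp
  then have "U *\<^sub>v v = V *\<^sub>v ((minv V * U) *\<^sub>v v)"
    using assoc_mult_mat_vec[OF V(1) mult_carrier_mat[OF W(1) U] v] by simp
  also have "\<dots> = 0\<^sub>v n"
    using assms(6) V(1) by (intro eq_vecI) (auto simp: scalar_prod_def)
  finally show "U *\<^sub>v v = 0\<^sub>v n" .
qed

lemma index_mult_diagonal:
  fixes A D :: "'a::semiring_0 mat"
  assumes A: "A \<in> carrier_mat p r" and D: "D \<in> carrier_mat r r" "diagonal_mat D"
    and "i < p" "j < r"
  shows "(A * D) $$ (i,j) = A $$ (i,j) * D $$ (j,j)"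
proof -
  have "(A * D) $$ (i,j) = (\<Sum>k<r. A $$ (i,k) * D $$ (k,j))"
    using assms by (intro index_mult_mat_sum) auto
  also have "\<dots> = (\<Sum>k<r. if k = j then A $$ (i,j) * D $$ (j,j) else 0)"
    using D \<open>j < r\<close> by (intro sum.cong) (auto simp: diagonal_mat_def)
  finally show ?thesis using \<open>j < r\<close> by simp
qed

lemma diagonal_mult_self:
  fixes D :: "'a::comm_semiring_1 mat"
  assumes D: "D \<in> carrier_mat r r" "diagonal_mat D"
  shows "diagonal_mat (D * D)" and "\<And>i. i < r \<Longrightarrow> (D * D) $$ (i,i) = (D $$ (i,i))\<^sup>2"
  using D index_mult_diagonal[OF D(1) D] by (auto simp: diagonal_mat_def power2_eq_square)

lemma minv_diagonal:
  fixes D :: "complex mat"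
  assumes D: "D \<in> carrier_mat r r" "diagonal_mat D" and nz: "\<And>i. i < r \<Longrightarrow> D $$ (i,i) \<noteq> 0"
  shows "minv D \<in> carrier_mat r r" and "D * minv D = 1\<^sub>m r" and "minv D * D = 1\<^sub>m r"
proof -
  define X where "X = mat r r (\<lambda>(i,j). if i = j then inverse (D $$ (i,i)) else 0 :: complex)"
  have X: "X \<in> carrier_mat r r" "diagonal_mat X" unfolding X_def diagonal_mat_def by auto
  have "D * X = 1\<^sub>m r"
    by (rule eq_matI) (use D nz index_mult_diagonal[OF D(1) X] in \<open>auto simp: X_def diagonal_mat_def\<close>)
  then show "minv D \<in> carrier_mat r r" "D * minv D = 1\<^sub>m r" "minv D * D = 1\<^sub>m r"
    using minv_of_right_inverse[OF D(1) X(1)] by auto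
qed

lemma mrank_eq_0_imp_zero:
  fixes A :: "complex mat"
  assumes "mrank A = 0"
  shows "A = 0\<^sub>m (dim_row A) (dim_col A)"
proof (rule eq_matI, rule ccontr)
  fix i j assume ij: "i < dim_row (0\<^sub>m (dim_row A) (dim_col A) :: complex mat)"
    "j < dim_col (0\<^sub>m (dim_row A) (dim_col A) :: complex mat)"
    and nz: "A $$ (i,j) \<noteq> 0\<^sub>m (dim_row A) (dim_col A) $$ (i,j)"
  interpret V: vec_space "TYPE(complex)" "dim_row A" .
  have c: "col A j \<in> carrier_vec (dim_row A)"
    by simp
  have "V.lin_indpt {col A j}"
  proof (rule V.finite_lin_indpt2)
    fix a assume "V.lincomb a {col A j} = 0\<^sub>v (dim_row A)"
    then have "a (col A j) * col A j $ i = 0"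
      using V.lincomb_index[of i "{col A j}" a] ij c by simp
    then show "\<forall>v\<in>{col A j}. a v = 0"
      using nz ij by simp
  qed (use c in auto)
  then have "card {col A j} \<le> V.rank A"
    using ij by (intro V.rank_ge_card_indpt[of A "dim_col A"]) (auto simp: cols_def)
  then show False
    using assms unfolding mrank_def by simp
qed simp_all

section \<open>Normalising an injective matrix by the eigenvectors of its Gram matrix\<close>

lemma col_neq_zero_of_isometry:
  fixes E :: "complex mat"
  assumes E: "E \<in> carrier_mat n r" "mat_adjoint E * E = 1\<^sub>m r" and i: "i < r"
  shows "col E i \<noteq> 0\<^sub>v n"
proof
  assume "col E i = 0\<^sub>v n"
  then have "(mat_adjoint E * E) $$ (i,i) = 0"
    using E(1) i by (simp add: scalar_prod_def)
  with E i show False by simp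
qed

lemma eigenvalue_nonzero_of_injective:
  fixes M :: "complex mat"
  assumes M: "M \<in> carrier_mat n r"
    and inj: "\<And>v. v \<in> carrier_vec r \<Longrightarrow> M *\<^sub>v v = 0\<^sub>v n \<Longrightarrow> v = 0\<^sub>v r"
    and c: "c \<in> carrier_vec r" "c \<noteq> 0\<^sub>v r" and eig: "(mat_adjoint M * M) *\<^sub>v c = d \<cdot>\<^sub>v c"
  shows "d \<noteq> 0"
proof
  assume "d = 0"
  have "mat_adjoint M \<in> carrier_mat r n"
    using M by auto
  then have "mat_adjoint M *\<^sub>v (M *\<^sub>v c) = (mat_adjoint M * M) *\<^sub>v c"
    using assoc_mult_mat_vec M c by metis
  also have "\<dots> = 0\<^sub>v r"
    using eig \<open>d = 0\<close> c by auto
  finally have "(M *\<^sub>v c) \<bullet>c (M *\<^sub>v c) = 0"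
    using mat_adjoint_inner[OF M _ c(1), of "M *\<^sub>v c"] M c by simp
  then have "M *\<^sub>v c = 0\<^sub>v n"
    using conjugate_square_eq_0_vec[of "M *\<^sub>v c" n] mult_mat_vec_carrier[OF M c(1)] by simp
  with inj c show False by blast
qed

lemma mult_eigen_columns:
  fixes A E D :: "'a::comm_semiring_0 mat"
  assumes A: "A \<in> carrier_mat r r" and E: "E \<in> carrier_mat r r"
    and D: "D \<in> carrier_mat r r" "diagonal_mat D"
    and eig: "\<forall>i<r. A *\<^sub>v col E i = D $$ (i,i) \<cdot>\<^sub>v col E i"
  shows "A * E = E * D"
proof (rule eq_matI)
  fix k i assume "k < dim_row (E * D)" "i < dim_col (E * D)"
  with E D have "k < r" "i < r" by auto
  then have "(A * E) $$ (k,i) = (A *\<^sub>v col E i) $ k"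
    using A E by simp
  also have "\<dots> = (E * D) $$ (k,i)"
    using eig \<open>k < r\<close> \<open>i < r\<close> E by (simp add: index_mult_diagonal[OF E D] mult.commute)
  finally show "(A * E) $$ (k,i) = (E * D) $$ (k,i)" .
qed (use A E D in auto)

lemma adjoint_mult_self_normalized:
  fixes M E D :: "complex mat"
  assumes M: "M \<in> carrier_mat n r" and E: "E \<in> carrier_mat r r" "mat_adjoint E * E = 1\<^sub>m r"
    and D: "D \<in> carrier_mat r r" "diagonal_mat D" "\<forall>i<r. Im (D $$ (i,i)) = 0"
    and Di: "minv D \<in> carrier_mat r r" "D * minv D = 1\<^sub>m r"
    and gram: "mat_adjoint M * M * E = E * (D * D)"
    and B_def: "B = E * minv D" and S_def: "S = M * B"
  shows "mat_adjoint S * S = 1\<^sub>m r"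
proof -
  have B: "B \<in> carrier_mat r r" and Eh: "mat_adjoint E \<in> carrier_mat r r"
    using E Di unfolding B_def by auto
  have Mh: "mat_adjoint M \<in> carrier_mat r n" and Bh: "mat_adjoint B \<in> carrier_mat r r"
    using M B by auto
  then have G: "mat_adjoint M * M \<in> carrier_mat r r"
    using M by auto
  have "mat_adjoint S * S = mat_adjoint B * (mat_adjoint M * M * B)"
    using assoc_mult_mat[OF Bh Mh mult_carrier_mat[OF M B]] assoc_mult_mat[OF Mh M B]
    by (simp add: S_def mat_adjoint_mult[OF M B])
  also have "mat_adjoint M * M * B = E * (D * D) * minv D"
    using G E(1) Di(1) by (simp add: B_def gram[symmetric])
  also have "\<dots> = E * D"
    using assoc_mult_mat[OF E(1) mult_carrier_mat[OF D(1) D(1)] Di(1)]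
      assoc_mult_mat[OF D(1) D(1) Di(1)] right_mult_one_mat[OF D(1)] Di by simp
  also have "mat_adjoint B * (E * D) = mat_adjoint (minv D) * D"
  proof -
    have "mat_adjoint (minv D) \<in> carrier_mat r r"
      using Di by auto
    then show ?thesis
      using assoc_mult_mat[OF _ Eh mult_carrier_mat[OF E(1) D(1)]] assoc_mult_mat[OF Eh E(1) D(1)]
        E(2) left_mult_one_mat[OF D(1)] by (simp add: B_def mat_adjoint_mult[OF E(1) Di(1)])
  qed
  also have "\<dots> = mat_adjoint (D * minv D)"
    using mat_adjoint_mult[OF D(1) Di(1)] mat_adjoint_real_diagonal[OF D] by simp
  finally show ?thesis
    using Di by simp
qed

lemma semi_orthogonal_normalization:
  fixes M E D :: "complex mat"
  assumes M: "M \<in> carrier_mat n r"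
    and inj: "\<And>v. v \<in> carrier_vec r \<Longrightarrow> M *\<^sub>v v = 0\<^sub>v n \<Longrightarrow> v = 0\<^sub>v r"
    and E: "E \<in> carrier_mat r r" "mat_adjoint E * E = 1\<^sub>m r"
    and D: "D \<in> carrier_mat r r" "diagonal_mat D" "\<forall>i<r. Im (D $$ (i,i)) = 0"
    and eig: "\<forall>i<r. (mat_adjoint M * M) *\<^sub>v col E i = (D $$ (i,i))\<^sup>2 \<cdot>\<^sub>v col E i"
    and B_def: "B = E * minv D" and S_def: "S = M * B"
  shows "mat_adjoint S * S = 1\<^sub>m r" and "S \<in> carrier_mat n r" and "minv B \<in> carrier_mat r r"
    and "S * minv B = M" and "mat_adjoint S * M = minv B"
proof -
  have "D $$ (i,i) \<noteq> 0" if "i < r" for i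
  proof -
    have "(D $$ (i,i))\<^sup>2 \<noteq> 0"
      by (rule eigenvalue_nonzero_of_injective[OF M inj _ col_neq_zero_of_isometry[OF E that]])
        (use eig that E(1) in auto)
    then show ?thesis by simp
  qed
  note Di = minv_diagonal[OF D(1,2) this]
  have gram: "mat_adjoint M * M * E = E * (D * D)"
  proof (rule mult_eigen_columns)
    show "mat_adjoint M * M \<in> carrier_mat r r"
      using M by (intro carrier_matI) auto
  qed (use diagonal_mult_self[OF D(1,2)] E D eig in auto)
  show SS: "mat_adjoint S * S = 1\<^sub>m r"
    by (rule adjoint_mult_self_normalized[OF M E D Di(1,2) gram B_def S_def])
  have B: "B \<in> carrier_mat r r" and Eh: "mat_adjoint E \<in> carrier_mat r r"
    using E Di unfolding B_def by auto
  have "B * (D * mat_adjoint E) = E * (minv D * D * mat_adjoint E)"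
    using E(1) Di(1) D(1) Eh
    by (simp add: B_def assoc_mult_mat[OF E(1) Di(1) mult_carrier_mat[OF D(1) Eh]])
  also have "\<dots> = 1\<^sub>m r"
    using Di left_mult_one_mat[OF Eh] mat_mult_left_right_inverse[OF Eh E(1) E(2)] by simp
  finally have "B * (D * mat_adjoint E) = 1\<^sub>m r" .
  note Bi = minv_of_right_inverse[OF B mult_carrier_mat[OF D(1) Eh] this]
  show S: "S \<in> carrier_mat n r"
    using M B unfolding S_def by auto
  show "minv B \<in> carrier_mat r r" "S * minv B = M"
    using Bi assoc_mult_mat[OF M B Bi(1)] right_mult_one_mat[OF M] by (simp_all add: S_def)
  moreover have "mat_adjoint S \<in> carrier_mat r n"
    using S by auto
  ultimately have "mat_adjoint S * M = mat_adjoint S * S * minv B"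
    using assoc_mult_mat[OF _ S Bi(1)] by simp
  then show "mat_adjoint S * M = minv B"
    using SS left_mult_one_mat[OF Bi(1)] by simp
qed

section \<open>Multilinear multiplication\<close>

lemma sum_product3:
  "(\<Sum>a\<in>A. f a) * (\<Sum>b\<in>B. g b) * (\<Sum>c\<in>C. h c) * t
   = (\<Sum>a\<in>A. \<Sum>b\<in>B. \<Sum>c\<in>C. f a * g b * h c * (t::'a::semiring_0))"
proof -
  have "(\<Sum>a\<in>A. f a) * (\<Sum>b\<in>B. g b) * (\<Sum>c\<in>C. h c) * t
      = (\<Sum>a\<in>A. f a * ((\<Sum>b\<in>B. g b) * ((\<Sum>c\<in>C. h c) * t)))"
    by (simp add: sum_distrib_right mult.assoc)
  also have "\<dots> = (\<Sum>a\<in>A. \<Sum>b\<in>B. \<Sum>c\<in>C. f a * (g b * (h c * t)))"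
    by (simp only: sum_distrib_right, simp only: sum_distrib_left)
  finally show ?thesis
    by (simp add: mult.assoc)
qed

lemma sum_swap_outer3:
  "(\<Sum>c\<in>C. \<Sum>x\<in>X. \<Sum>y\<in>Y. \<Sum>z\<in>Z. G c x y z)
   = (\<Sum>x\<in>X. \<Sum>y\<in>Y. \<Sum>z\<in>Z. \<Sum>c\<in>C. (G c x y z :: 'a::comm_monoid_add))"
proof -
  have "(\<Sum>c\<in>C. \<Sum>x\<in>X. \<Sum>y\<in>Y. \<Sum>z\<in>Z. G c x y z) = (\<Sum>x\<in>X. \<Sum>c\<in>C. \<Sum>y\<in>Y. \<Sum>z\<in>Z. G c x y z)"
    by (rule sum.swap)
  also have "\<dots> = (\<Sum>x\<in>X. \<Sum>y\<in>Y. \<Sum>c\<in>C. \<Sum>z\<in>Z. G c x y z)"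
    by (intro sum.cong refl) (rule sum.swap)
  also have "\<dots> = (\<Sum>x\<in>X. \<Sum>y\<in>Y. \<Sum>z\<in>Z. \<Sum>c\<in>C. G c x y z)"
    by (intro sum.cong refl) (rule sum.swap)
  finally show ?thesis .
qed

lemma sum_swap3_3:
  "(\<Sum>a\<in>A. \<Sum>b\<in>B. \<Sum>c\<in>C. \<Sum>x\<in>X. \<Sum>y\<in>Y. \<Sum>z\<in>Z. F a b c x y z)
   = (\<Sum>x\<in>X. \<Sum>y\<in>Y. \<Sum>z\<in>Z. \<Sum>a\<in>A. \<Sum>b\<in>B. \<Sum>c\<in>C. (F a b c x y z :: 'a::comm_monoid_add))"
proof -
  have "(\<Sum>a\<in>A. \<Sum>b\<in>B. \<Sum>c\<in>C. \<Sum>x\<in>X. \<Sum>y\<in>Y. \<Sum>z\<in>Z. F a b c x y z)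
      = (\<Sum>a\<in>A. \<Sum>b\<in>B. \<Sum>x\<in>X. \<Sum>y\<in>Y. \<Sum>z\<in>Z. \<Sum>c\<in>C. F a b c x y z)"
    by (intro sum.cong refl) (rule sum_swap_outer3)
  also have "\<dots> = (\<Sum>a\<in>A. \<Sum>x\<in>X. \<Sum>y\<in>Y. \<Sum>z\<in>Z. \<Sum>b\<in>B. \<Sum>c\<in>C. F a b c x y z)"
    by (intro sum.cong refl) (rule sum_swap_outer3)
  also have "\<dots> = (\<Sum>x\<in>X. \<Sum>y\<in>Y. \<Sum>z\<in>Z. \<Sum>a\<in>A. \<Sum>b\<in>B. \<Sum>c\<in>C. F a b c x y z)"
    by (rule sum_swap_outer3)
  finally show ?thesis .
qed

lemma sum_delta_mult: "i < (n::nat) \<Longrightarrow> (\<Sum>a<n. (if i = a then c else 0) * f a) = c * (f i :: 'a::semiring_0)"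
proof -
  assume "i < n"
  have "(\<Sum>a<n. (if i = a then c else 0) * f a) = (\<Sum>a<n. if a = i then c * f i else 0)"
    by (rule sum.cong) auto
  with \<open>i < n\<close> show ?thesis
    by (simp add: sum.delta)
qed

lemma teq_sym: "teq n1 n2 n3 X Y \<Longrightarrow> teq n1 n2 n3 Y X"
  and teq_trans: "teq n1 n2 n3 X Y \<Longrightarrow> teq n1 n2 n3 Y Z \<Longrightarrow> teq n1 n2 n3 X Z"
  unfolding teq_def by auto

lemma mlmul_cong:
  "teq (dim_col A1) (dim_col A2) (dim_col A3) X Y \<Longrightarrow> mlmul A1 A2 A3 X = mlmul A1 A2 A3 Y"
  unfolding teq_def mlmul_def by (intro ext sum.cong refl) auto

lemma mlmul_mlmul:
  assumes A: "A1 \<in> carrier_mat p1 q1" "A2 \<in> carrier_mat p2 q2" "A3 \<in> carrier_mat p3 q3"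
    and B: "B1 \<in> carrier_mat q1 s1" "B2 \<in> carrier_mat q2 s2" "B3 \<in> carrier_mat q3 s3"
  shows "teq p1 p2 p3 (mlmul A1 A2 A3 (mlmul B1 B2 B3 T)) (mlmul (A1 * B1) (A2 * B2) (A3 * B3) T)"
  unfolding teq_def
proof (intro allI impI)
  fix i j l assume "i < p1" "j < p2" "l < p3"
  have "mlmul A1 A2 A3 (mlmul B1 B2 B3 T) i j l =
    (\<Sum>a<q1. \<Sum>b<q2. \<Sum>c<q3. \<Sum>x<s1. \<Sum>y<s2. \<Sum>z<s3.
       A1 $$ (i,a) * A2 $$ (j,b) * A3 $$ (l,c) * (B1 $$ (a,x) * B2 $$ (b,y) * B3 $$ (c,z) * T x y z))"
    using A B unfolding mlmul_def by (simp add: sum_distrib_left)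
  also have "\<dots> = (\<Sum>x<s1. \<Sum>y<s2. \<Sum>z<s3. \<Sum>a<q1. \<Sum>b<q2. \<Sum>c<q3.
       A1 $$ (i,a) * A2 $$ (j,b) * A3 $$ (l,c) * (B1 $$ (a,x) * B2 $$ (b,y) * B3 $$ (c,z) * T x y z))"
    by (rule sum_swap3_3)
  also have "\<dots> = (\<Sum>x<s1. \<Sum>y<s2. \<Sum>z<s3. (\<Sum>a<q1. A1 $$ (i,a) * B1 $$ (a,x)) *
      (\<Sum>b<q2. A2 $$ (j,b) * B2 $$ (b,y)) * (\<Sum>c<q3. A3 $$ (l,c) * B3 $$ (c,z)) * T x y z)"
    unfolding sum_product3 by (intro sum.cong refl) (simp add: mult_ac)
  also have "\<dots> = mlmul (A1 * B1) (A2 * B2) (A3 * B3) T i j l"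
  proof -
    have "dim_col (A1 * B1) = s1" "dim_col (A2 * B2) = s2" "dim_col (A3 * B3) = s3"
      using B by auto
    then show ?thesis
      unfolding mlmul_def using A B \<open>i < p1\<close> \<open>j < p2\<close> \<open>l < p3\<close>
      by (simp add: index_mult_mat_sum del: index_mult_mat)
  qed
  finally show "mlmul A1 A2 A3 (mlmul B1 B2 B3 T) i j l = mlmul (A1 * B1) (A2 * B2) (A3 * B3) T i j l" .
qed

lemma mlmul_coordinate_projection:
  fixes P1 P2 P3 :: "complex mat"
  assumes P: "P1 \<in> carrier_mat n1 n1" "P2 \<in> carrier_mat n2 n2" "P3 \<in> carrier_mat n3 n3"
    and P1: "\<And>a a'. a < n1 \<Longrightarrow> a' < n1 \<Longrightarrow> P1 $$ (a,a') = (if a = a' \<and> a \<in> SA then 1 else 0)"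
    and P2: "\<And>b b'. b < n2 \<Longrightarrow> b' < n2 \<Longrightarrow> P2 $$ (b,b') = (if b = b' \<and> b \<in> SB then 1 else 0)"
    and P3: "\<And>c c'. c < n3 \<Longrightarrow> c' < n3 \<Longrightarrow> P3 $$ (c,c') = (if c = c' \<and> c \<in> SC then 1 else 0)"
    and supp: "\<And>i j l. i < n1 \<Longrightarrow> j < n2 \<Longrightarrow> l < n3 \<Longrightarrow> i \<notin> SA \<or> j \<notin> SB \<or> l \<notin> SC \<Longrightarrow> X i j l = 0"
  shows "teq n1 n2 n3 (mlmul P1 P2 P3 X) X"
  unfolding teq_def
proof (intro allI impI)
  fix i j l assume ijl: "i < n1" "j < n2" "l < n3"
  let ?\<delta> = "\<lambda>a i (Q::bool). if i = a then (if Q then 1 else 0) else 0 :: complex"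
  have "mlmul P1 P2 P3 X i j l
      = (\<Sum>a<n1. \<Sum>b<n2. \<Sum>c<n3. ?\<delta> a i (i \<in> SA) * (?\<delta> b j (j \<in> SB) * (?\<delta> c l (l \<in> SC) * X a b c)))"
    using P ijl unfolding mlmul_def by (intro sum.cong refl) (auto simp: P1 P2 P3)
  also have "\<dots> = (\<Sum>a<n1. ?\<delta> a i (i \<in> SA) * (\<Sum>b<n2. ?\<delta> b j (j \<in> SB) * (\<Sum>c<n3. ?\<delta> c l (l \<in> SC) * X a b c)))"
    by (simp add: sum_distrib_left)
  also have "\<dots> = X i j l"
    using ijl supp[OF ijl] by (auto simp: sum_delta_mult)
  finally show "mlmul P1 P2 P3 X i j l = X i j l" .
qed

lemma mlmul_one: "teq n1 n2 n3 (mlmul (1\<^sub>m n1) (1\<^sub>m n2) (1\<^sub>m n3) X) X"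
  by (rule mlmul_coordinate_projection[where SA = UNIV and SB = UNIV and SC = UNIV]) auto

lemma mlmul_zero:
  "teq (dim_col A1) (dim_col A2) (dim_col A3) X (\<lambda>_ _ _. 0) \<Longrightarrow> mlmul A1 A2 A3 X = (\<lambda>_ _ _. 0)"
  by (subst mlmul_cong) (auto simp: mlmul_def)

lemma mlmul_minv:
  fixes V1 V2 V3 :: "complex mat"
  assumes V: "V1 \<in> carrier_mat n1 n1" "V2 \<in> carrier_mat n2 n2" "V3 \<in> carrier_mat n3 n3"
    and "invertible_mat V1" "invertible_mat V2" "invertible_mat V3"
    and Y: "teq n1 n2 n3 Y (mlmul V1 V2 V3 X)"
  shows "teq n1 n2 n3 X (mlmul (minv V1) (minv V2) (minv V3) Y)"
proof -
  note W1 = minv_of_invertible[OF V(1) assms(4)] and W2 = minv_of_invertible[OF V(2) assms(5)]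
    and W3 = minv_of_invertible[OF V(3) assms(6)]
  have "mlmul (minv V1) (minv V2) (minv V3) Y = mlmul (minv V1) (minv V2) (minv V3) (mlmul V1 V2 V3 X)"
    using Y W1 W2 W3 by (intro mlmul_cong) auto
  then show ?thesis
    using mlmul_mlmul[OF W1(1) W2(1) W3(1) V, of X] mlmul_one[of n1 n2 n3 X] W1 W2 W3
    by (auto intro: teq_sym teq_trans)
qed

section \<open>Flattenings and selection matrices\<close>

lemma mult_add_less_mult: "j < n2 \<Longrightarrow> l < n3 \<Longrightarrow> j * n3 + l < n2 * (n3::nat)"
proof -
  assume "j < n2" "l < n3"
  then have "j * n3 + l < (j + 1) * n3"
    by simp
  also have "\<dots> \<le> n2 * n3"
    using \<open>j < n2\<close> by (intro mult_le_mono1) simp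
  finally show ?thesis .
qed

lemma dim_flat [simp]:
  "dim_row (flat1 n1 n2 n3 X) = n1" "dim_col (flat1 n1 n2 n3 X) = n2 * n3"
  "dim_row (flat2 n1 n2 n3 X) = n2" "dim_col (flat2 n1 n2 n3 X) = n1 * n3"
  "dim_row (flat3 n1 n2 n3 X) = n3" "dim_col (flat3 n1 n2 n3 X) = n1 * n2"
  unfolding flat1_def flat2_def flat3_def by simp_all

lemma flat_carrier:
  "flat1 n1 n2 n3 X \<in> carrier_mat n1 (n2 * n3)" "flat2 n1 n2 n3 X \<in> carrier_mat n2 (n1 * n3)"
  "flat3 n1 n2 n3 X \<in> carrier_mat n3 (n1 * n2)"
  by (rule carrier_matI, simp_all)+

lemma flat2_conv_flat1: "flat2 n1 n2 n3 X = flat1 n2 n1 n3 (\<lambda>j i l. X i j l)"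
  and flat3_conv_flat1: "flat3 n1 n2 n3 X = flat1 n3 n1 n2 (\<lambda>l i j. X i j l)"
  unfolding flat1_def flat2_def flat3_def by simp_all

lemma index_flat1:
  "i < n1 \<Longrightarrow> j < n2 \<Longrightarrow> l < n3 \<Longrightarrow> flat1 n1 n2 n3 X $$ (i, j * n3 + l) = X i j l"
  unfolding flat1_def by (simp add: mult_add_less_mult)

lemma flat1_eq_0_iff: "flat1 n1 n2 n3 X = 0\<^sub>m n1 (n2 * n3) \<longleftrightarrow> teq n1 n2 n3 X (\<lambda>_ _ _. 0)"
proof
  assume F: "flat1 n1 n2 n3 X = 0\<^sub>m n1 (n2 * n3)"
  show "teq n1 n2 n3 X (\<lambda>_ _ _. 0)"
    unfolding teq_def
  proof (intro allI impI)
    fix i j l assume "i < n1" "j < n2" "l < n3"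
    then show "X i j l = 0"
      using index_flat1[of i n1 j n2 l n3 X] F by (simp add: mult_add_less_mult)
  qed
next
  assume "teq n1 n2 n3 X (\<lambda>_ _ _. 0)"
  moreover have "c div n3 < n2 \<and> c mod n3 < n3" if "c < n2 * n3" for c
  proof -
    have "0 < n3"
      using that by (cases n3) auto
    with that show ?thesis
      by (simp add: less_mult_imp_div_less)
  qed
  ultimately show "flat1 n1 n2 n3 X = 0\<^sub>m n1 (n2 * n3)"
    unfolding teq_def flat1_def by (intro eq_matI) auto
qed

lemma flat2_eq_0_iff: "flat2 n1 n2 n3 X = 0\<^sub>m n2 (n1 * n3) \<longleftrightarrow> teq n1 n2 n3 X (\<lambda>_ _ _. 0)"
  and flat3_eq_0_iff: "flat3 n1 n2 n3 X = 0\<^sub>m n3 (n1 * n2) \<longleftrightarrow> teq n1 n2 n3 X (\<lambda>_ _ _. 0)"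
  unfolding flat2_conv_flat1 flat3_conv_flat1 flat1_eq_0_iff teq_def by blast+

lemma nz_rows_zero_mat: "nz_rows (0\<^sub>m n m) = []"
  unfolding nz_rows_def by (auto simp: filter_empty_conv)

lemma nz_rows_zero_row:
  assumes "i < dim_row F" "i \<notin> set (nz_rows F)" "j < dim_col F"
  shows "F $$ (i,j) = 0"
proof -
  have "row F i = 0\<^sub>v (dim_col F)"
    using assms unfolding nz_rows_def by auto
  then have "row F i $ j = 0"
    using assms by simp
  then show ?thesis
    using assms by simp
qed

lemma nz_rows_nth_less: "b < length (nz_rows F) \<Longrightarrow> nz_rows F ! b < dim_row F"
  using nth_mem[of b "nz_rows F"] unfolding nz_rows_def by auto

lemma nz_rows_nth_eq_iff:
  "b < length (nz_rows F) \<Longrightarrow> b' < length (nz_rows F) \<Longrightarrow> nz_rows F ! b = nz_rows F ! b' \<longleftrightarrow> b = b'"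
  by (simp add: nth_eq_iff_index_eq nz_rows_def)

lemma flat1_zero_row:
  assumes "i < n1" "j < n2" "l < n3" "i \<notin> set (nz_rows (flat1 n1 n2 n3 X))"
  shows "X i j l = 0"
  using nz_rows_zero_row[of i "flat1 n1 n2 n3 X" "j * n3 + l"] index_flat1[of i n1 j n2 l n3 X] assms
  by (simp add: mult_add_less_mult)

lemma dim_sel_mat [simp]: "dim_row (sel_mat F) = dim_row F" "dim_col (sel_mat F) = length (nz_rows F)"
  unfolding sel_mat_def by simp_all

lemma sel_mat_carrier: "sel_mat F \<in> carrier_mat (dim_row F) (length (nz_rows F))"
  by (rule carrier_matI) simp_all

lemma index_sel_mat:
  "a < dim_row F \<Longrightarrow> b < length (nz_rows F) \<Longrightarrow> sel_mat F $$ (a,b) = (if a = nz_rows F ! b then 1 else 0)"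
  unfolding sel_mat_def by simp

lemma sel_mat_injective:
  assumes v: "v \<in> carrier_vec (length (nz_rows F))" and "sel_mat F *\<^sub>v v = 0\<^sub>v (dim_row F)"
  shows "v = 0\<^sub>v (length (nz_rows F))"
proof (rule eq_vecI)
  fix b assume "b < dim_vec (0\<^sub>v (length (nz_rows F)) :: complex vec)"
  then have b: "b < length (nz_rows F)"
    by simp
  let ?m = "length (nz_rows F)"
  have "(sel_mat F *\<^sub>v v) $ (nz_rows F ! b) = (\<Sum>x<?m. sel_mat F $$ (nz_rows F ! b, x) * v $ x)"
    using v nz_rows_nth_less[OF b] by (auto simp: scalar_prod_def atLeast0LessThan intro!: sum.cong)
  also have "\<dots> = (\<Sum>x<?m. (if b = x then 1 else 0) * v $ x)"
    using b nz_rows_nth_less[OF b] by (intro sum.cong refl) (auto simp: index_sel_mat nz_rows_nth_eq_iff)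
  also have "\<dots> = v $ b"
    using b by (simp add: sum_delta_mult)
  finally show "v $ b = 0\<^sub>v (length (nz_rows F)) $ b"
    using assms b nz_rows_nth_less[OF b] by simp
qed (use v in auto)

lemma sel_mat_mult_mat_adjoint:
  assumes a: "a < dim_row F" and a': "a' < dim_row F"
  shows "(sel_mat F * mat_adjoint (sel_mat F)) $$ (a,a') = (if a = a' \<and> a \<in> set (nz_rows F) then 1 else 0)"
proof -
  let ?m = "length (nz_rows F)"
  have U: "sel_mat F \<in> carrier_mat (dim_row F) ?m" and "mat_adjoint (sel_mat F) \<in> carrier_mat ?m (dim_row F)"
    using sel_mat_carrier[of F] by auto
  then have "(sel_mat F * mat_adjoint (sel_mat F)) $$ (a,a')
      = (\<Sum>b<?m. sel_mat F $$ (a,b) * mat_adjoint (sel_mat F) $$ (b,a'))"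
    using a a' by (intro index_mult_mat_sum)
  also have "\<dots> = (\<Sum>b<?m. if a = nz_rows F ! b \<and> a' = nz_rows F ! b then 1 else 0)"
    using a a' U by (intro sum.cong refl) (auto simp: index_sel_mat)
  also have "\<dots> = (if a = a' \<and> a \<in> set (nz_rows F) then 1 else 0)"
  proof (cases "a = a' \<and> a \<in> set (nz_rows F)")
    case True
    then obtain b0 where "b0 < ?m" "nz_rows F ! b0 = a"
      by (auto simp: in_set_conv_nth)
    then have "(\<Sum>b<?m. if a = nz_rows F ! b \<and> a' = nz_rows F ! b then 1 else 0)
        = (\<Sum>b<?m. if b = b0 then 1 else (0::complex))"
      using True by (intro sum.cong refl) (auto simp: nz_rows_nth_eq_iff)
    also have "\<dots> = 1"
      using \<open>b0 < ?m\<close> by simp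
    finally show ?thesis
      using True by auto
  next
    case False
    then show ?thesis
      by (auto intro!: sum.neutral)
  qed
  finally show ?thesis .
qed

lemma mlmul_sel_mat_mat_adjoint:
  fixes X :: tensor3 and n1 n2 n3 :: nat
  defines "U1 \<equiv> sel_mat (flat1 n1 n2 n3 X)" and "U2 \<equiv> sel_mat (flat2 n1 n2 n3 X)"
    and "U3 \<equiv> sel_mat (flat3 n1 n2 n3 X)"
  shows "teq n1 n2 n3 X (mlmul U1 U2 U3 (mlmul (mat_adjoint U1) (mat_adjoint U2) (mat_adjoint U3) X))"
proof -
  have "dim_row U1 = n1" "dim_row U2 = n2" "dim_row U3 = n3"
    unfolding U1_def U2_def U3_def by simp_all
  then have U: "U1 \<in> carrier_mat n1 (dim_col U1)" "U2 \<in> carrier_mat n2 (dim_col U2)"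
    "U3 \<in> carrier_mat n3 (dim_col U3)"
    and Uh: "mat_adjoint U1 \<in> carrier_mat (dim_col U1) n1" "mat_adjoint U2 \<in> carrier_mat (dim_col U2) n2"
    "mat_adjoint U3 \<in> carrier_mat (dim_col U3) n3"
    by (auto intro!: carrier_matI)
  have "teq n1 n2 n3 (mlmul (U1 * mat_adjoint U1) (U2 * mat_adjoint U2) (U3 * mat_adjoint U3) X) X"
  proof (rule mlmul_coordinate_projection)
    show "(U1 * mat_adjoint U1) $$ (a,a') = (if a = a' \<and> a \<in> set (nz_rows (flat1 n1 n2 n3 X)) then 1 else 0)"
      if "a < n1" "a' < n1" for a a'
      using sel_mat_mult_mat_adjoint[of a "flat1 n1 n2 n3 X" a'] that by (simp add: U1_def)
    show "(U2 * mat_adjoint U2) $$ (b,b') = (if b = b' \<and> b \<in> set (nz_rows (flat2 n1 n2 n3 X)) then 1 else 0)"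
      if "b < n2" "b' < n2" for b b'
      using sel_mat_mult_mat_adjoint[of b "flat2 n1 n2 n3 X" b'] that by (simp add: U2_def flat2_conv_flat1)
    show "(U3 * mat_adjoint U3) $$ (c,c') = (if c = c' \<and> c \<in> set (nz_rows (flat3 n1 n2 n3 X)) then 1 else 0)"
      if "c < n3" "c' < n3" for c c'
      using sel_mat_mult_mat_adjoint[of c "flat3 n1 n2 n3 X" c'] that by (simp add: U3_def flat3_conv_flat1)
    show "X i j l = 0" if "i < n1" "j < n2" "l < n3" and "i \<notin> set (nz_rows (flat1 n1 n2 n3 X))
        \<or> j \<notin> set (nz_rows (flat2 n1 n2 n3 X)) \<or> l \<notin> set (nz_rows (flat3 n1 n2 n3 X))" for i j l
      using that(4)
    proof (elim disjE)
      show "i \<notin> set (nz_rows (flat1 n1 n2 n3 X)) \<Longrightarrow> X i j l = 0"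
        using flat1_zero_row[of i n1 j n2 l n3 X] that(1-3) by blast
      show "j \<notin> set (nz_rows (flat2 n1 n2 n3 X)) \<Longrightarrow> X i j l = 0"
        using flat1_zero_row[of j n2 i n1 l n3 "\<lambda>j i l. X i j l"] that(1-3)
        unfolding flat2_conv_flat1 by blast
      show "l \<notin> set (nz_rows (flat3 n1 n2 n3 X)) \<Longrightarrow> X i j l = 0"
        using flat1_zero_row[of l n3 i n1 j n2 "\<lambda>l i j. X i j l"] that(1-3)
        unfolding flat3_conv_flat1 by blast
    qed
  qed (use mult_carrier_mat[OF U(1) Uh(1)] mult_carrier_mat[OF U(2) Uh(2)] mult_carrier_mat[OF U(3) Uh(3)]
      in simp_all)
  moreover have "teq n1 n2 n3 (mlmul U1 U2 U3 (mlmul (mat_adjoint U1) (mat_adjoint U2) (mat_adjoint U3) X))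
      (mlmul (U1 * mat_adjoint U1) (U2 * mat_adjoint U2) (U3 * mat_adjoint U3) X)"
    by (rule mlmul_mlmul[OF U Uh])
  ultimately show ?thesis
    by (blast intro: teq_sym teq_trans)
qed

lemma sel_mat_semi_orthogonal_normalization:
  fixes F V E D M B S :: "complex mat"
  assumes F: "F \<in> carrier_mat n m" and zero: "r = 0 \<longrightarrow> F = 0\<^sub>m n m"
    and V: "V \<in> carrier_mat n n" "invertible_mat V"
    and E: "E \<in> carrier_mat r r" "mat_adjoint E * E = 1\<^sub>m r"
    and D: "D \<in> carrier_mat r r" "diagonal_mat D" "\<forall>i<r. Im (D $$ (i,i)) = 0"
    and M_def: "M = minv V * sel_mat F"
    and eig: "\<forall>i<r. (mat_adjoint M * M) *\<^sub>v col E i = (D $$ (i,i))\<^sup>2 \<cdot>\<^sub>v col E i"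
    and B_def: "B = E * minv D" and S_def: "S = M * B"
  shows "sel_mat F \<in> carrier_mat n r" and "mat_adjoint S * S = 1\<^sub>m r" and "S \<in> carrier_mat n r"
    and "minv B \<in> carrier_mat r r" and "S * minv B = M" and "mat_adjoint S * M = minv B"
proof -
  have "length (nz_rows F) = r"
  proof (cases "r = 0")
    case True
    then show ?thesis
      using zero by (simp add: nz_rows_zero_mat)
  next
    case False
    \<comment> \<open>the eigenvector equations only typecheck if \<open>sel_mat F\<close> has r columns\<close>
    then have "dim_vec ((mat_adjoint M * M) *\<^sub>v col E 0) = dim_vec ((D $$ (0,0))\<^sup>2 \<cdot>\<^sub>v col E 0)"
      using eig by simp
    then show ?thesis
      using E(1) by (simp add: M_def)
  qed
  then show U: "sel_mat F \<in> carrier_mat n r"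
    using sel_mat_carrier[of F] F by simp
  note W = minv_of_invertible[OF V]
  have M: "M \<in> carrier_mat n r"
    using W(1) U by (simp add: M_def)
  have inj: "v = 0\<^sub>v r" if "v \<in> carrier_vec r" "M *\<^sub>v v = 0\<^sub>v n" for v
  proof (rule minv_mult_injective[OF V U _ that(1) that(2)[unfolded M_def]])
    show "w = 0\<^sub>v r" if "w \<in> carrier_vec r" "sel_mat F *\<^sub>v w = 0\<^sub>v n" for w
      using sel_mat_injective[of w F] that F \<open>length (nz_rows F) = r\<close> by auto
  qed
  show "mat_adjoint S * S = 1\<^sub>m r" "S \<in> carrier_mat n r" "minv B \<in> carrier_mat r r"
    "S * minv B = M" "mat_adjoint S * M = minv B"
    using semi_orthogonal_normalization[OF M inj E D eig B_def S_def] by simp_all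
qed

lemma mlmul_core_of_factorization:
  fixes S1 S2 S3 K1 K2 K3 M1 M2 M3 :: "complex mat"
  assumes S: "S1 \<in> carrier_mat n1 r1" "S2 \<in> carrier_mat n2 r2" "S3 \<in> carrier_mat n3 r3"
    and K: "K1 \<in> carrier_mat r1 r1" "K2 \<in> carrier_mat r2 r2" "K3 \<in> carrier_mat r3 r3"
    and SK: "S1 * K1 = M1" "S2 * K2 = M2" "S3 * K3 = M3"
    and SM: "mat_adjoint S1 * M1 = K1" "mat_adjoint S2 * M2 = K2" "mat_adjoint S3 * M3 = K3"
    and T: "teq n1 n2 n3 T (mlmul M1 M2 M3 X)"
  shows "teq n1 n2 n3 T (mlmul S1 S2 S3 (mlmul K1 K2 K3 X))"
    and "teq r1 r2 r3 (mlmul K1 K2 K3 X) (mlmul (mat_adjoint S1) (mat_adjoint S2) (mat_adjoint S3) T)"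
proof -
  show "teq n1 n2 n3 T (mlmul S1 S2 S3 (mlmul K1 K2 K3 X))"
    using T mlmul_mlmul[OF S K, of X] SK by (blast intro: teq_sym teq_trans)
  have Sh: "mat_adjoint S1 \<in> carrier_mat r1 n1" "mat_adjoint S2 \<in> carrier_mat r2 n2"
    "mat_adjoint S3 \<in> carrier_mat r3 n3"
    using S by auto
  have M: "M1 \<in> carrier_mat n1 r1" "M2 \<in> carrier_mat n2 r2" "M3 \<in> carrier_mat n3 r3"
    using S K SK by auto
  have "mlmul (mat_adjoint S1) (mat_adjoint S2) (mat_adjoint S3) T
      = mlmul (mat_adjoint S1) (mat_adjoint S2) (mat_adjoint S3) (mlmul M1 M2 M3 X)"
    using T S by (intro mlmul_cong) auto
  then show "teq r1 r2 r3 (mlmul K1 K2 K3 X) (mlmul (mat_adjoint S1) (mat_adjoint S2) (mat_adjoint S3) T)"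
    using mlmul_mlmul[OF Sh M, of X] SM by (simp add: teq_sym)
qed

theorem core_of_equivalent_tensor:
  fixes V1 V2 V3 E1 E2 E3 D1 D2 D3 U1 U2 U3 M1 M2 M3 B1 B2 B3 S1 S2 S3 :: "complex mat"
    and n1 n2 n3 r1 r2 r3 :: nat and T Tc Cc C :: tensor3
  assumes r: "r1 = mrank (flat1 n1 n2 n3 T)" "r2 = mrank (flat2 n1 n2 n3 T)" "r3 = mrank (flat3 n1 n2 n3 T)"
    and V: "V1 \<in> carrier_mat n1 n1" "V2 \<in> carrier_mat n2 n2" "V3 \<in> carrier_mat n3 n3"
    and Vinv: "invertible_mat V1" "invertible_mat V2" "invertible_mat V3"
    and TcV: "teq n1 n2 n3 Tc (mlmul V1 V2 V3 T)"
    and U: "U1 = sel_mat (flat1 n1 n2 n3 Tc)" "U2 = sel_mat (flat2 n1 n2 n3 Tc)"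
      "U3 = sel_mat (flat3 n1 n2 n3 Tc)"
    and Cc: "Cc = mlmul (mat_adjoint U1) (mat_adjoint U2) (mat_adjoint U3) Tc"
    and M: "M1 = minv V1 * U1" "M2 = minv V2 * U2" "M3 = minv V3 * U3"
    and E: "E1 \<in> carrier_mat r1 r1" "E2 \<in> carrier_mat r2 r2" "E3 \<in> carrier_mat r3 r3"
    and Eunit: "mat_adjoint E1 * E1 = 1\<^sub>m r1" "mat_adjoint E2 * E2 = 1\<^sub>m r2"
      "mat_adjoint E3 * E3 = 1\<^sub>m r3"
    and D: "D1 \<in> carrier_mat r1 r1" "D2 \<in> carrier_mat r2 r2" "D3 \<in> carrier_mat r3 r3"
    and Ddiag: "diagonal_mat D1" "diagonal_mat D2" "diagonal_mat D3"
    and Dreal: "\<forall>i<r1. Im (D1 $$ (i,i)) = 0" "\<forall>i<r2. Im (D2 $$ (i,i)) = 0" "\<forall>i<r3. Im (D3 $$ (i,i)) = 0"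
    and eig: "\<forall>i<r1. (mat_adjoint M1 * M1) *\<^sub>v col E1 i = (D1 $$ (i,i))\<^sup>2 \<cdot>\<^sub>v col E1 i"
      "\<forall>i<r2. (mat_adjoint M2 * M2) *\<^sub>v col E2 i = (D2 $$ (i,i))\<^sup>2 \<cdot>\<^sub>v col E2 i"
      "\<forall>i<r3. (mat_adjoint M3 * M3) *\<^sub>v col E3 i = (D3 $$ (i,i))\<^sup>2 \<cdot>\<^sub>v col E3 i"
    and B: "B1 = E1 * minv D1" "B2 = E2 * minv D2" "B3 = E3 * minv D3"
    and S: "S1 = M1 * B1" "S2 = M2 * B2" "S3 = M3 * B3"
    and C: "C = mlmul (minv B1) (minv B2) (minv B3) Cc"
  shows "mat_adjoint S1 * S1 = 1\<^sub>m r1 \<and> mat_adjoint S2 * S2 = 1\<^sub>m r2 \<and> mat_adjoint S3 * S3 = 1\<^sub>m r3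
    \<and> teq n1 n2 n3 T (mlmul S1 S2 S3 C)
    \<and> teq r1 r2 r3 C (mlmul (mat_adjoint S1) (mat_adjoint S2) (mat_adjoint S3) T)"
proof -
  have "teq n1 n2 n3 Tc (\<lambda>_ _ _. 0)" if "teq n1 n2 n3 T (\<lambda>_ _ _. 0)"
    using TcV mlmul_zero[of V1 V2 V3 T] V that by (simp add: teq_def)
  then have zero: "r1 = 0 \<longrightarrow> flat1 n1 n2 n3 Tc = 0\<^sub>m n1 (n2 * n3)"
    "r2 = 0 \<longrightarrow> flat2 n1 n2 n3 Tc = 0\<^sub>m n2 (n1 * n3)" "r3 = 0 \<longrightarrow> flat3 n1 n2 n3 Tc = 0\<^sub>m n3 (n1 * n2)"
    using r mrank_eq_0_imp_zero[of "flat1 n1 n2 n3 T"] mrank_eq_0_imp_zero[of "flat2 n1 n2 n3 T"]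
      mrank_eq_0_imp_zero[of "flat3 n1 n2 n3 T"]
    by (simp_all add: flat1_eq_0_iff flat2_eq_0_iff flat3_eq_0_iff)
  note F = flat_carrier[of n1 n2 n3 Tc]
  note m1 = sel_mat_semi_orthogonal_normalization[OF F(1) zero(1) V(1) Vinv(1) E(1) Eunit(1) D(1) Ddiag(1)
      Dreal(1) M(1)[unfolded U(1)] eig(1) B(1) S(1), folded U(1)]
    and m2 = sel_mat_semi_orthogonal_normalization[OF F(2) zero(2) V(2) Vinv(2) E(2) Eunit(2) D(2) Ddiag(2)
      Dreal(2) M(2)[unfolded U(2)] eig(2) B(2) S(2), folded U(2)]
    and m3 = sel_mat_semi_orthogonal_normalization[OF F(3) zero(3) V(3) Vinv(3) E(3) Eunit(3) D(3) Ddiag(3)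
      Dreal(3) M(3)[unfolded U(3)] eig(3) B(3) S(3), folded U(3)]
  note W = minv_of_invertible(1)[OF V(1) Vinv(1)] minv_of_invertible(1)[OF V(2) Vinv(2)]
    minv_of_invertible(1)[OF V(3) Vinv(3)]
  have "teq n1 n2 n3 T (mlmul (minv V1) (minv V2) (minv V3) Tc)"
    by (rule mlmul_minv[OF V Vinv TcV])
  also have "mlmul (minv V1) (minv V2) (minv V3) Tc = mlmul (minv V1) (minv V2) (minv V3) (mlmul U1 U2 U3 Cc)"
    using mlmul_sel_mat_mat_adjoint[of n1 n2 n3 Tc] W unfolding U Cc by (intro mlmul_cong) simp
  finally have "teq n1 n2 n3 T (mlmul M1 M2 M3 Cc)"
    unfolding M by (rule teq_trans[OF _ mlmul_mlmul[OF W m1(1) m2(1) m3(1)]])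
  note core = mlmul_core_of_factorization[OF m1(3) m2(3) m3(3) m1(4) m2(4) m3(4) m1(5) m2(5) m3(5)
      m1(6) m2(6) m3(6) this]
  show ?thesis
    using core m1(2) m2(2) m3(2) unfolding C by simp
qed

theorem mainTheorem6:
  fixes P1 P2 P3 V1 V2 V3 E1 E2 E3 D1 D2 D3 :: "complex mat"
    and h1 h2 h3 k a1 a2 a3 n1 n2 n3 r1 r2 r3 :: nat
    and T Tc Cc C :: tensor3
    and U1 U2 U3 M1 M2 M3 B1 B2 B3 S1 S2 S3 :: "complex mat"
  assumes P1: "P1 \<in> carrier_mat (h1+1) (k+1)" and P2: "P2 \<in> carrier_mat (h2+1) (k+1)"
    and P3: "P3 \<in> carrier_mat (h3+1) (k+1)"
    and hk: "h1 \<le> k" "h2 \<le> k" "h3 \<le> k"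
    and rk: "mrank P1 = h1 + 1" "mrank P2 = h2 + 1" "mrank P3 = h3 + 1"
    and h2le: "2 \<le> h1" "2 \<le> h2" "2 \<le> h3"
    and prof: "1 \<le> a1" "a1 \<le> h1" "1 \<le> a2" "a2 \<le> h2" "1 \<le> a3" "a3 \<le> h3" "a1 + a2 + a3 = k + 1"
    and gen: "genericity k P1 P2 P3"
  assumes "T = grassmann P1 P2 P3 a1 a2 a3"
    and "Tc = canonical_form h1 h2 h3 k a1 a2 a3"
    and "n1 = gdim P1 a1" and "n2 = gdim P2 a2" and "n3 = gdim P3 a3"
    and "r1 = mrank (flat1 n1 n2 n3 T)" and "r2 = mrank (flat2 n1 n2 n3 T)"
    and "r3 = mrank (flat3 n1 n2 n3 T)"
  assumes V: "V1 \<in> carrier_mat n1 n1" "V2 \<in> carrier_mat n2 n2" "V3 \<in> carrier_mat n3 n3"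
    and Vinv: "invertible_mat V1" "invertible_mat V2" "invertible_mat V3"
    and TcV: "teq n1 n2 n3 Tc (mlmul V1 V2 V3 T)"
  assumes "U1 = sel_mat (flat1 n1 n2 n3 Tc)" and "U2 = sel_mat (flat2 n1 n2 n3 Tc)"
    and "U3 = sel_mat (flat3 n1 n2 n3 Tc)"
    and "Cc = mlmul (mat_adjoint U1) (mat_adjoint U2) (mat_adjoint U3) Tc"
    and "M1 = minv V1 * U1" and "M2 = minv V2 * U2" and "M3 = minv V3 * U3"
  assumes E: "E1 \<in> carrier_mat r1 r1" "E2 \<in> carrier_mat r2 r2" "E3 \<in> carrier_mat r3 r3"
    and Eunit: "mat_adjoint E1 * E1 = 1\<^sub>m r1" "mat_adjoint E2 * E2 = 1\<^sub>m r2"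
      "mat_adjoint E3 * E3 = 1\<^sub>m r3"
    and D: "D1 \<in> carrier_mat r1 r1" "D2 \<in> carrier_mat r2 r2" "D3 \<in> carrier_mat r3 r3"
    and Ddiag: "diagonal_mat D1" "diagonal_mat D2" "diagonal_mat D3"
    and Dnonneg: "\<forall>i<r1. Im (D1 $$ (i,i)) = 0 \<and> 0 \<le> Re (D1 $$ (i,i))"
      "\<forall>i<r2. Im (D2 $$ (i,i)) = 0 \<and> 0 \<le> Re (D2 $$ (i,i))"
      "\<forall>i<r3. Im (D3 $$ (i,i)) = 0 \<and> 0 \<le> Re (D3 $$ (i,i))"
    and eig: "\<forall>i<r1. (mat_adjoint M1 * M1) *\<^sub>v col E1 i = (D1 $$ (i,i))^2 \<cdot>\<^sub>v col E1 i"
      "\<forall>i<r2. (mat_adjoint M2 * M2) *\<^sub>v col E2 i = (D2 $$ (i,i))^2 \<cdot>\<^sub>v col E2 i"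
      "\<forall>i<r3. (mat_adjoint M3 * M3) *\<^sub>v col E3 i = (D3 $$ (i,i))^2 \<cdot>\<^sub>v col E3 i"
  assumes "B1 = E1 * minv D1" and "B2 = E2 * minv D2" and "B3 = E3 * minv D3"
    and "S1 = M1 * B1" and "S2 = M2 * B2" and "S3 = M3 * B3"
    and "C = mlmul (minv B1) (minv B2) (minv B3) Cc"
  shows "mat_adjoint S1 * S1 = 1\<^sub>m r1 \<and> mat_adjoint S2 * S2 = 1\<^sub>m r2 \<and> mat_adjoint S3 * S3 = 1\<^sub>m r3
    \<and> teq n1 n2 n3 T (mlmul S1 S2 S3 C)
    \<and> teq r1 r2 r3 C (mlmul (mat_adjoint S1) (mat_adjoint S2) (mat_adjoint S3) T)"
proof -
  have Dreal: "\<forall>i<r1. Im (D1 $$ (i,i)) = 0" "\<forall>i<r2. Im (D2 $$ (i,i)) = 0" "\<forall>i<r3. Im (D3 $$ (i,i)) = 0"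
    using Dnonneg by simp_all
  show ?thesis
    by (rule core_of_equivalent_tensor[OF assms(26-28) V Vinv TcV assms(36-42) E Eunit D Ddiag Dreal eig
          assms(61-67)])
qed

end
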